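(* Let $d\ge 2$, let $\bm{k}_1,\ldots,\bm{k}_d\in\mathbb{R}^d$ be a basis of $\mathbb{R}^d$ with $\mathsf{K}=[\bm{k}_1,\ldots,\bm{k}_d]$, and let $\mathfrak{a},\mathfrak{b}\in\mathbb{R}$. For $\bm{u}=[\alpha_1,\ldots,\alpha_d,\beta_1,\ldots,\beta_d]^T\in\mathbb{C}^{2d}$ and $\bm{x}\in\mathbb{R}^d$ let $p(\bm{x};\bm{u})=\sum_{j=1}^d\alpha_j e^{i\bm{k}_j\cdot\bm{x}}+\beta_j e^{-i\bm{k}_j\cdot\bm{x}}$, $\psi(\bm{x};\bm{u})=\mathfrak{a}|p(\bm{x};\bm{u})|^2-\mathfrak{b}|\nabla_{\bm{x}}p(\bm{x};\bm{u})|^2$, and let $\mathsf{Q}(\bm{0})$ be the Hermitian matrix with $\psi(\bm{0};\bm{u})=\bm{u}^*\mathsf{Q}(\bm{0})\bm{u}$. Fix a sign $\pm$ (with $\mp$ denoting the opposite sign), and let $\bm{u}=[\bm{v};\pm\bm{v}]$, $\bm{v}\in\mathbb{R}^d$, be a real unit-norm eigenvector of $\mathsf{Q}(\bm{0})$ with eigenvalue $\lambda$. Let $R^\pm_{\lambda,\bm{u}}$ be the set of pairs $(\bm{s},\bm{r})\in\{0,1\}^d\times\{0,1\}^d$ such that the three vectors $$[(-1)^{\bm{s}}\odot\bm{v};\mp(-1)^{\bm{s}}\odot\bm{v}],\quad [(-1)^{\bm{r}}\odot\bm{v};\mp(-1)^{\bm{r}}\odot\bm{v}],\quad [(-1)^{\bm{s}+\bm{r}}\odot\bm{v};\pm(-1)^{\bm{s}+\bm{r}}\odot\bm{v}]$$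 all lie in the $\lambda$-eigenspace of $\mathsf{Q}(\bm{0})$. Then for every $\bm{n}\in\mathbb{Z}^d$ and every $(\bm{s},\bm{r})\in R^\pm_{\lambda,\bm{u}}$, the set $L_{\lambda,\bm{u}}=\{\bm{x}\in\mathbb{R}^d:\psi(\bm{x};\bm{u})=\lambda\}$ contains $$\{\mathsf{K}^{-T}(\theta(-1)^{\bm{s}}+\phi(-1)^{\bm{r}}+2\pi\bm{n}):\theta,\phi\in\mathbb{R}\}.$$ Moreover, this set is a plane whenever $(-1)^{\bm{s}}$ and $(-1)^{\bm{r}}$ are linearly independent, equivalently whenever $(-1)^{\bm{s}+\bm{r}}\notin\{-\bm{1},\bm{1}\}$.
   Context: $[\bm{x};\bm{y}]$ denotes the vertical stacking of vectors $\bm{x},\bm{y}$. For $\bm{s}\in\{0,1\}^d$ (or $\bm{s}\in\{0,1,2\}^d$ for sums), $(-1)^{\bm{s}}=[(-1)^{s_1},\ldots,(-1)^{s_d}]$; $\bm{1}$ is the all-ones vector in $\mathbb{R}^d$; and $\odot$ is the componentwise (Hadamard) product. *)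

theory Defs
  imports "HOL-Analysis.Analysis"
begin

text \<open>Coefficients of u = [alpha_1..alpha_d, beta_1..beta_d] in C^{2d}; index Inl j is alpha_j, Inr j is beta_j.
  The wave vectors k_j are the columns of K.\<close>

definition pfun :: "real^'d^'d \<Rightarrow> complex^('d + 'd) \<Rightarrow> real^'d \<Rightarrow> complex" where
  "pfun K u x = (\<Sum>j\<in>UNIV. u $ Inl j * exp (\<i> * complex_of_real (column j K \<bullet> x))
                         + u $ Inr j * exp (- \<i> * complex_of_real (column j K \<bullet> x)))"

definition grad_sq :: "real^'d^'d \<Rightarrow> complex^('d + 'd) \<Rightarrow> real^'d \<Rightarrow> real" where
  "grad_sq K u x = (\<Sum>m\<in>UNIV.
      (cmod (vector_derivative (\<lambda>t. pfun K u (x + t *\<^sub>R axis m 1)) (at 0))) ^ 2)"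

definition psi :: "real \<Rightarrow> real \<Rightarrow> real^'d^'d \<Rightarrow> complex^('d + 'd) \<Rightarrow> real^'d \<Rightarrow> real" where
  "psi a b K u x = a * (cmod (pfun K u x)) ^ 2 - b * grad_sq K u x"

definition hermitian_mat :: "complex^'n^'n \<Rightarrow> bool" where
  "hermitian_mat Q \<longleftrightarrow> (\<forall>i j. Q $ i $ j = cnj (Q $ j $ i))"

definition quad_form :: "complex^'n \<Rightarrow> complex^'n^'n \<Rightarrow> complex" where
  "quad_form u Q = (\<Sum>i\<in>UNIV. \<Sum>j\<in>UNIV. cnj (u $ i) * Q $ i $ j * u $ j)"

text \<open>(-1)^s componentwise, for s with entries in {0,1} (or {0,1,2} for sums).\<close>
definition sgnvec :: "('d \<Rightarrow> nat) \<Rightarrow> real^'d" where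
  "sgnvec s = (\<chi> j. (-1) ^ s j)"

definition stack :: "real \<Rightarrow> real^'d \<Rightarrow> complex^('d + 'd)" where
  "stack c w = (\<chi> i. case i of Inl j \<Rightarrow> complex_of_real (w $ j) | Inr j \<Rightarrow> complex_of_real (c * w $ j))"

definition eigvec_of :: "complex^'n^'n \<Rightarrow> real \<Rightarrow> complex^'n \<Rightarrow> bool" where
  "eigvec_of Q lam w \<longleftrightarrow> Q *v w = lam *\<^sub>R w"

end

theory Submission
  imports Defs
begin

(*
  Translating the argument by x multiplies alpha_j by exp(i k_j.x) and beta_j by its conjugate;
  this preserves the norm of u and gives psi(x; u) = psi(0; u') = u'* Q(0) u' for the shifted
  coefficients u'.  At x = K^-T (theta e + phi f + 2 pi n) with sign vectors e = (-1)^s and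
  f = (-1)^r we have k_j.x = theta e_j + phi f_j + 2 pi n_j, so each phase factors as
  (cos theta + i e_j sin theta)(cos phi + i f_j sin phi).  Expanding, u' is a linear combination
  of [v; +-v], [e v; -+e v], [f v; -+f v] and [e f v; +-e f v], all in the lambda-eigenspace,
  hence psi(x; u) = lambda |u'|^2 = lambda.  Two sign vectors are dependent iff e f is constant,
  i.e. e f = +-1.
*)

definition phase_shift :: "real^'d^'d \<Rightarrow> real^'d \<Rightarrow> complex^('d + 'd) \<Rightarrow> complex^('d + 'd)" where
  "phase_shift K x u = (\<chi> i. case i of
      Inl j \<Rightarrow> u $ i * exp (\<i> * complex_of_real (column j K \<bullet> x))
    | Inr j \<Rightarrow> u $ i * exp (- \<i> * complex_of_real (column j K \<bullet> x)))"

lemma pfun_add: "pfun K u (x + z) = pfun K (phase_shift K x u) z"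
  unfolding pfun_def phase_shift_def
  by (intro sum.cong refl) (simp add: algebra_simps flip: exp_add)

lemma psi_eq_psi_phase_shift: "psi a b K u x = psi a b K (phase_shift K x u) 0"
proof -
  have "pfun K u (x + z) = pfun K (phase_shift K x u) (0 + z)" for z
    by (simp add: pfun_add)
  moreover have "pfun K u x = pfun K (phase_shift K x u) 0"
    using pfun_add[of K u x 0] by simp
  ultimately show ?thesis
    by (simp only: psi_def grad_sq_def)
qed

lemma norm_phase_shift [simp]: "norm (phase_shift K x u) = norm u"
  unfolding norm_vec_def phase_shift_def
  by (intro arg_cong[where f="\<lambda>f. L2_set f UNIV"] ext) (auto split: sum.splits simp: norm_mult)


lemma eigvec_of_add: "eigvec_of Q lam w \<Longrightarrow> eigvec_of Q lam w' \<Longrightarrow> eigvec_of Q lam (w + w')"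
  unfolding eigvec_of_def by (simp add: matrix_vector_right_distrib scaleR_add_right)

lemma eigvec_of_diff: "eigvec_of Q lam w \<Longrightarrow> eigvec_of Q lam w' \<Longrightarrow> eigvec_of Q lam (w - w')"
  unfolding eigvec_of_def by (simp add: matrix_vector_mult_diff_distrib scaleR_diff_right)

lemma eigvec_of_scale: "eigvec_of Q lam w \<Longrightarrow> eigvec_of Q lam (c *s w)"
  unfolding eigvec_of_def by (simp add: vector_scalar_commute vec_eq_iff scaleR_conv_of_real mult.left_commute)

lemma quad_form_eigvec:
  assumes "eigvec_of Q lam w"
  shows "quad_form w Q = complex_of_real (lam * (norm w)\<^sup>2)"
proof -
  have "quad_form w Q = (\<Sum>i\<in>UNIV. cnj (w $ i) * (Q *v w) $ i)"
    unfolding quad_form_def matrix_vector_mult_def by (simp add: sum_distrib_left mult.assoc)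
  also have "\<dots> = (\<Sum>i\<in>UNIV. complex_of_real lam * complex_of_real ((cmod (w $ i))\<^sup>2))"
    using assms unfolding eigvec_of_def vec_eq_iff vector_scaleR_component
    by (simp add: scaleR_conv_of_real mult_ac complex_norm_square del: of_real_power)
  also have "\<dots> = complex_of_real (lam * (norm w)\<^sup>2)"
    unfolding norm_vec_def L2_set_def by (simp add: sum_nonneg sum_distrib_left)
  finally show ?thesis .
qed

lemma psi_0_eigvec:
  assumes "\<forall>u. complex_of_real (psi a b K u 0) = quad_form u Q" and "eigvec_of Q lam u"
  shows "psi a b K u 0 = lam * (norm u)\<^sup>2"
  using assms quad_form_eigvec of_real_eq_iff by metis


definition sign_vector :: "real^'d \<Rightarrow> bool" where
  "sign_vector e \<longleftrightarrow> (\<forall>j. e $ j = 1 \<or> e $ j = -1)"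

lemma sign_vector_sgnvec: "sign_vector (sgnvec s)"
  unfolding sign_vector_def sgnvec_def by (metis vec_lambda_beta neg_one_even_power neg_one_odd_power)

lemma sgnvec_add: "sgnvec (\<lambda>j. s j + r j) = sgnvec s * sgnvec r"
  by (simp add: sgnvec_def vec_eq_iff power_add)

lemma sign_vector_mult_self: "sign_vector e \<Longrightarrow> e $ j * e $ j = 1"
  unfolding sign_vector_def by (metis mult_1_left mult_minus1 minus_minus)

lemma sign_vector_mult:
  assumes "sign_vector e" and "sign_vector f"
  shows "sign_vector (e * f)"
  unfolding sign_vector_def
proof
  fix j
  have "e $ j = 1 \<or> e $ j = -1" and "f $ j = 1 \<or> f $ j = -1"
    using assms unfolding sign_vector_def by blast+
  then show "(e * f) $ j = 1 \<or> (e * f) $ j = -1"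
    by auto
qed

lemma sign_vectors_independent_iff:
  assumes e: "sign_vector e" and f: "sign_vector f"
  shows "(\<forall>c1 c2. c1 *\<^sub>R e + c2 *\<^sub>R f = 0 \<longrightarrow> c1 = 0 \<and> c2 = 0) \<longleftrightarrow> e * f \<notin> {vec (-1), vec 1}"
proof
  assume indep: "\<forall>c1 c2. c1 *\<^sub>R e + c2 *\<^sub>R f = 0 \<longrightarrow> c1 = 0 \<and> c2 = 0"
  show "e * f \<notin> {vec (-1), vec 1}"
  proof
    assume "e * f \<in> {vec (-1), vec 1}"
    then obtain k where ef: "e * f = vec k"
      by blast
    have "f $ j = k * e $ j" for j
    proof -
      have "f $ j = (e $ j * e $ j) * f $ j"
        using sign_vector_mult_self[OF e] by simp
      also have "\<dots> = (e * f) $ j * e $ j"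
        by (simp add: mult_ac)
      finally show ?thesis
        using ef by simp
    qed
    then have "k *\<^sub>R e + (-1) *\<^sub>R f = 0"
      by (simp add: vec_eq_iff)
    then have "k = 0 \<and> (-1 :: real) = 0"
      using indep by blast
    then show False
      by simp
  qed
next
  assume nb: "e * f \<notin> {vec (-1), vec 1}"
  show "\<forall>c1 c2. c1 *\<^sub>R e + c2 *\<^sub>R f = 0 \<longrightarrow> c1 = 0 \<and> c2 = 0"
  proof (intro allI impI)
    fix c1 c2
    assume "c1 *\<^sub>R e + c2 *\<^sub>R f = 0"
    then have "e $ j * (c1 * e $ j + c2 * f $ j) = 0" for j
      by (simp add: vec_eq_iff)
    then have comb: "c1 + c2 * (e * f) $ j = 0" for j
      using sign_vector_mult_self[OF e] by (simp add: algebra_simps)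
    show "c1 = 0 \<and> c2 = 0"
    proof (cases "c2 = 0")
      case True
      then show ?thesis
        using comb by simp
    next
      case False
      then have "(e * f) $ j = - c1 / c2" for j
        using comb[of j] by (simp add: field_simps add_eq_0_iff)
      then have "e * f = vec (- c1 / c2)"
        by (simp add: vec_eq_iff)
      moreover have "sign_vector (e * f)"
        using e f by (rule sign_vector_mult)
      ultimately show ?thesis
        using nb unfolding sign_vector_def by auto
    qed
  qed
qed


lemma span_pair: "span {a, b} = {\<theta> *\<^sub>R a + \<phi> *\<^sub>R b | \<theta> \<phi>. True}"
  unfolding span_insert[of a] span_singleton
  by (auto simp: diff_eq_eq image_iff add.commute)

lemma affine_aff_dim_plane:
  fixes a b c :: "'a::euclidean_space"
  assumes indep: "\<forall>c1 c2. c1 *\<^sub>R a + c2 *\<^sub>R b = 0 \<longrightarrow> c1 = 0 \<and> c2 = 0"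
  defines "P \<equiv> {\<theta> *\<^sub>R a + \<phi> *\<^sub>R b + c | \<theta> \<phi>. True}"
  shows "affine P \<and> aff_dim P = 2"
proof -
  have P: "P = (+) c ` span {a, b}"
    unfolding P_def span_pair image_def by (auto simp: add.commute) blast+
  have "b \<noteq> 0"
    using indep[rule_format, of 0 1] by auto
  moreover have "a \<notin> span {b}"
  proof
    assume "a \<in> span {b}"
    then obtain k where "1 *\<^sub>R a + (- k) *\<^sub>R b = 0"
      unfolding span_singleton by auto
    then show False
      using indep by fastforce
  qed
  ultimately have "dim {a, b} = 2"
    by (simp add: dim_insert)
  then show ?thesis
    unfolding P
    by (simp add: subspace_imp_affine aff_dim_translation_eq aff_dim_subspace dim_span
        flip: affine_translation)
qed

lemma affine_aff_dim_linear_image_plane: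
  fixes f :: "'a::euclidean_space \<Rightarrow> 'b::euclidean_space"
  assumes f: "linear f" "inj f"
    and indep: "\<forall>c1 c2. c1 *\<^sub>R a + c2 *\<^sub>R b = 0 \<longrightarrow> c1 = 0 \<and> c2 = 0"
  shows "let S = {f (\<theta> *\<^sub>R a + \<phi> *\<^sub>R b + c) | \<theta> \<phi>. True} in affine S \<and> aff_dim S = 2"
proof -
  have image: "{f (\<theta> *\<^sub>R a + \<phi> *\<^sub>R b + c) | \<theta> \<phi>. True} = {\<theta> *\<^sub>R f a + \<phi> *\<^sub>R f b + f c | \<theta> \<phi>. True}"
    by (simp add: linear_add[OF f(1)] linear_scale[OF f(1)])
  have indep_image: "\<forall>c1 c2. c1 *\<^sub>R f a + c2 *\<^sub>R f b = 0 \<longrightarrow> c1 = 0 \<and> c2 = 0"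
  proof (intro allI impI)
    fix c1 c2
    assume "c1 *\<^sub>R f a + c2 *\<^sub>R f b = 0"
    then have "f (c1 *\<^sub>R a + c2 *\<^sub>R b) = f 0"
      by (simp add: linear_add[OF f(1)] linear_scale[OF f(1)] linear_0[OF f(1)])
    then show "c1 = 0 \<and> c2 = 0"
      using indep injD[OF f(2)] by blast
  qed
  show ?thesis
    unfolding Let_def image by (rule affine_aff_dim_plane[OF indep_image])
qed


lemma transpose_mult_transpose_matrix_inv:
  fixes K :: "real^'d^'d"
  assumes "invertible K"
  shows "transpose K *v (transpose (matrix_inv K) *v y) = y"
proof -
  have "matrix_inv K ** K = mat 1"
    using assms unfolding invertible_def matrix_inv_def by (rule someI2_ex) blast
  then have "transpose K ** transpose (matrix_inv K) = mat 1"
    by (metis matrix_transpose_mul transpose_mat)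
  then show ?thesis
    by (metis matrix_vector_mul_assoc matrix_vector_mul_lid)
qed

lemma inner_column_transpose_matrix_inv:
  fixes K :: "real^'d^'d"
  assumes "invertible K"
  shows "column j K \<bullet> (transpose (matrix_inv K) *v y) = y $ j"
proof -
  have "column j K \<bullet> z = (transpose K *v z) $ j" for z
    by (simp add: inner_vec_def column_def transpose_def matrix_vector_mult_def mult.commute)
  then show ?thesis
    using transpose_mult_transpose_matrix_inv[OF assms] by simp
qed

lemma inj_transpose_matrix_inv:
  fixes K :: "real^'d^'d"
  assumes "invertible K"
  shows "inj ((*v) (transpose (matrix_inv K)))"
  by (rule inj_on_inverseI[where g="(*v) (transpose K)"])
    (rule transpose_mult_transpose_matrix_inv[OF assms])

lemma exp_i_sign_mult:
  assumes "\<epsilon> = 1 \<or> \<epsilon> = -1"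
  shows "exp (\<i> * complex_of_real (\<epsilon> * t)) = complex_of_real (cos t) + \<i> * complex_of_real (\<epsilon> * sin t)"
proof -
  have "exp (\<i> * complex_of_real (\<epsilon> * t)) = cis (\<epsilon> * t)"
    by (simp add: cis_conv_exp)
  then show ?thesis
    using assms by (auto simp: complex_eq_iff)
qed

lemma exp_i_plane_phase:
  assumes "\<epsilon> = 1 \<or> \<epsilon> = -1" and "\<delta> = 1 \<or> \<delta> = -1"
  shows "exp (\<i> * complex_of_real (\<theta> * \<epsilon> + \<phi> * \<delta> + 2 * pi * of_int n)) =
    (complex_of_real (cos \<theta>) + \<i> * complex_of_real (\<epsilon> * sin \<theta>))
    * (complex_of_real (cos \<phi>) + \<i> * complex_of_real (\<delta> * sin \<phi>))"
proof -
  have "exp (\<i> * complex_of_real (2 * pi * of_int n)) = 1"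
    using cis_multiple_2pi[of "of_int n"] by (simp add: cis_conv_exp)
  then show ?thesis
    using exp_i_sign_mult[OF assms(1), of \<theta>] exp_i_sign_mult[OF assms(2), of \<phi>]
    by (simp add: distrib_left exp_add mult.commute)
qed

lemma phase_shift_plane_point:
  fixes K :: "real^'d^'d" and n :: "'d \<Rightarrow> int"
  assumes K: "invertible K" and e: "sign_vector e" and f: "sign_vector f"
  shows "phase_shift K (transpose (matrix_inv K) *v
           (\<theta> *\<^sub>R e + \<phi> *\<^sub>R f + (2 * pi) *\<^sub>R (\<chi> j. real_of_int (n j)))) (stack \<sigma> v) =
      complex_of_real (cos \<theta> * cos \<phi>) *s stack \<sigma> v
    + (\<i> * complex_of_real (sin \<theta> * cos \<phi>)) *s stack (-\<sigma>) (e * v)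
    + (\<i> * complex_of_real (cos \<theta> * sin \<phi>)) *s stack (-\<sigma>) (f * v)
    - complex_of_real (sin \<theta> * sin \<phi>) *s stack \<sigma> (e * f * v)"
proof -
  define x where "x = transpose (matrix_inv K) *v
    (\<theta> *\<^sub>R e + \<phi> *\<^sub>R f + (2 * pi) *\<^sub>R (\<chi> j. real_of_int (n j)))"
  have kx: "column j K \<bullet> x = \<theta> * e $ j + \<phi> * f $ j + 2 * pi * of_int (n j)" for j
    unfolding x_def inner_column_transpose_matrix_inv[OF K] by simp
  have signs: "e $ j = 1 \<or> e $ j = -1" "f $ j = 1 \<or> f $ j = -1"
    "- e $ j = 1 \<or> - e $ j = -1" "- f $ j = 1 \<or> - f $ j = -1" for j
    using e f unfolding sign_vector_def by auto
  have phase_Inl: "exp (\<i> * complex_of_real (column j K \<bullet> x)) =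
      (complex_of_real (cos \<theta>) + \<i> * complex_of_real (e $ j * sin \<theta>))
      * (complex_of_real (cos \<phi>) + \<i> * complex_of_real (f $ j * sin \<phi>))" for j
    unfolding kx by (rule exp_i_plane_phase[OF signs(1,2)])
  have phase_Inr: "exp (- (\<i> * complex_of_real (column j K \<bullet> x))) =
      (complex_of_real (cos \<theta>) + \<i> * complex_of_real (- e $ j * sin \<theta>))
      * (complex_of_real (cos \<phi>) + \<i> * complex_of_real (- f $ j * sin \<phi>))" for j
  proof -
    have minus: "- (\<i> * complex_of_real (column j K \<bullet> x)) =
        \<i> * complex_of_real (\<theta> * - e $ j + \<phi> * - f $ j + 2 * pi * of_int (- n j))"
      unfolding kx by (simp add: algebra_simps)
    show ?thesis
      unfolding minus by (rule exp_i_plane_phase[OF signs(3,4)])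
  qed
  show ?thesis
    unfolding x_def[symmetric] vec_eq_iff
    by (simp add: phase_shift_def stack_def phase_Inl phase_Inr complex_eq_iff algebra_simps
        split: sum.split)
qed

lemma psi_plane_point:
  fixes K :: "real^'d^'d" and n :: "'d \<Rightarrow> int"
  assumes K: "invertible K"
    and Qrep: "\<forall>u. complex_of_real (psi a b K u 0) = quad_form u Q"
    and e: "sign_vector e" and f: "sign_vector f"
    and eig: "eigvec_of Q lam (stack \<sigma> v)"
    and eig_e: "eigvec_of Q lam (stack (-\<sigma>) (e * v))"
    and eig_f: "eigvec_of Q lam (stack (-\<sigma>) (f * v))"
    and eig_ef: "eigvec_of Q lam (stack \<sigma> (e * f * v))"
  shows "psi a b K (stack \<sigma> v) (transpose (matrix_inv K) *v
           (\<theta> *\<^sub>R e + \<phi> *\<^sub>R f + (2 * pi) *\<^sub>R (\<chi> j. real_of_int (n j))))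
         = lam * (norm (stack \<sigma> v))\<^sup>2"
    (is "psi a b K ?u ?x = _")
proof -
  have "eigvec_of Q lam (phase_shift K ?x ?u)"
    unfolding phase_shift_plane_point[OF K e f]
    by (intro eigvec_of_add eigvec_of_diff eigvec_of_scale eig eig_e eig_f eig_ef)
  then show ?thesis
    using psi_0_eigvec[OF Qrep] psi_eq_psi_phase_shift norm_phase_shift by metis
qed

theorem lemma2p9:
  fixes K :: "real^'d^'d" and a b lam \<sigma> :: real
    and Q :: "complex^('d + 'd)^('d + 'd)" and v :: "real^'d"
  assumes d2: "CARD('d) \<ge> 2"
    and basis: "invertible K"
    and herm: "hermitian_mat Q"
    and Qrep: "\<forall>u. complex_of_real (psi a b K u 0) = quad_form u Q"
    and sign: "\<sigma> = 1 \<or> \<sigma> = -1"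
    and unit: "norm (stack \<sigma> v) = 1"
    and eig: "eigvec_of Q lam (stack \<sigma> v)"
  shows "\<forall>s r. ((\<forall>j. s j \<le> 1) \<and> (\<forall>j. r j \<le> 1)
              \<and> eigvec_of Q lam (stack (-\<sigma>) (sgnvec s * v))
              \<and> eigvec_of Q lam (stack (-\<sigma>) (sgnvec r * v))
              \<and> eigvec_of Q lam (stack \<sigma> (sgnvec (\<lambda>j. s j + r j) * v)))
     \<longrightarrow> (\<forall>n :: 'd \<Rightarrow> int.
            {transpose (matrix_inv K) *v (\<theta> *\<^sub>R sgnvec s + \<phi> *\<^sub>R sgnvec r
                 + (2 * pi) *\<^sub>R (\<chi> j. real_of_int (n j))) | \<theta> \<phi>. True}
              \<subseteq> {x. psi a b K (stack \<sigma> v) x = lam}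
          \<and> ((\<forall>c1 c2. c1 *\<^sub>R sgnvec s + c2 *\<^sub>R sgnvec r = 0 \<longrightarrow> c1 = 0 \<and> c2 = 0) \<longrightarrow>
               (let S = {transpose (matrix_inv K) *v (\<theta> *\<^sub>R sgnvec s + \<phi> *\<^sub>R sgnvec r
                          + (2 * pi) *\<^sub>R (\<chi> j. real_of_int (n j))) | \<theta> \<phi>. True}
                in affine S \<and> aff_dim S = 2)))
        \<and> ((\<forall>c1 c2. c1 *\<^sub>R sgnvec s + c2 *\<^sub>R sgnvec r = 0 \<longrightarrow> c1 = 0 \<and> c2 = 0)
             \<longleftrightarrow> sgnvec (\<lambda>j. s j + r j) \<notin> {vec (-1), vec 1})"
proof -
  have level: "psi a b K (stack \<sigma> v) (transpose (matrix_inv K) *v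
      (\<theta> *\<^sub>R sgnvec s + \<phi> *\<^sub>R sgnvec r + (2 * pi) *\<^sub>R (\<chi> j. real_of_int (n j)))) = lam"
    if "eigvec_of Q lam (stack (-\<sigma>) (sgnvec s * v))"
      and "eigvec_of Q lam (stack (-\<sigma>) (sgnvec r * v))"
      and "eigvec_of Q lam (stack \<sigma> (sgnvec (\<lambda>j. s j + r j) * v))"
    for s r :: "'d \<Rightarrow> nat" and \<theta> \<phi> n
    using psi_plane_point[OF basis Qrep sign_vector_sgnvec sign_vector_sgnvec eig] that unit
    by (simp add: sgnvec_add)
  note plane = affine_aff_dim_linear_image_plane[OF matrix_vector_mul_linear inj_transpose_matrix_inv[OF basis]]
  have indep_iff: "(\<forall>c1 c2. c1 *\<^sub>R sgnvec s + c2 *\<^sub>R sgnvec r = 0 \<longrightarrow> c1 = 0 \<and> c2 = 0)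
      \<longleftrightarrow> sgnvec (\<lambda>j. s j + r j) \<notin> {vec (-1), vec 1}" for s r :: "'d \<Rightarrow> nat"
    unfolding sgnvec_add by (rule sign_vectors_independent_iff[OF sign_vector_sgnvec sign_vector_sgnvec])
  show ?thesis
  proof (intro allI impI conjI subsetI, goal_cases)
    case (1 s r n x)
    then show ?case
      using level by blast
  next
    case (2 s r n)
    show ?case
      using 2(2) by (rule plane)
  next
    case (3 s r)
    show ?case
      by (rule indep_iff)
  qed
qed

end
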